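(* Let $\alpha>0$ and $f\in H^{\alpha+1}(\mathbb{R}/2\pi\mathbb{Z})$ be fixed. Then for all $|\xi|$ sufficiently small, $$e^{-i\xi x}\partial_x\Lambda^\alpha e^{i\xi x}f(x)=\partial_x\Lambda^\alpha f(x)+i\xi|\xi|^\alpha\hat f(0)+\Big(\sum_{l=1}^\infty i\binom{\alpha+1}{2l-1}\Lambda^{\alpha-2(l-1)}\xi^{2l-1}\Big)\mathcal{P}f(x)+\Big(\sum_{r=1}^\infty\binom{\alpha+1}{2r}\partial_x\Lambda^{\alpha-2r}\xi^{2r}\Big)\mathcal{P}f(x),$$ where $\binom{m}{n}=\frac{m(m-1)\cdots(m-n+1)}{n!}$ is the generalized binomial coefficient and $\mathcal{P}$ is the orthogonal projection of $H^{\alpha+1}(\mathbb{R}/2\pi\mathbb{Z})$ onto the mean-zero subspace.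
   Context: Here $e^{i\xi x}f$ is viewed as a function on $\mathbb{R}$ and $\partial_x\Lambda^\alpha$ acts as the Fourier multiplier with symbol $i k|k|^\alpha$; for a $2\pi$-periodic $f=\sum_k\hat f(k)e^{ikx}$, this gives $e^{-i\xi x}\partial_x\Lambda^\alpha e^{i\xi x}f=\sum_k i(k+\xi)|k+\xi|^\alpha\hat f(k)e^{ikx}$. On the torus, $\Lambda^s g=\sum_{k\neq0}|k|^s\hat g(k)e^{ikx}$ for any real $s$ when $g$ is mean-zero (for $s<0$ this defines $\Lambda^s$ on mean-zero functions). $\hat f(0)$ is the zeroth Fourier coefficient. *)

theory Defs
  imports "HOL-Analysis.Analysis"
begin

text \<open>A 2pi-periodic function is represented by its Fourier coefficients
  c :: int => complex  (f = sum_k c k e^{ikx}).  All operators are Fourier multipliers.\<close>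

definition in_Hs :: "real \<Rightarrow> (int \<Rightarrow> complex) \<Rightarrow> bool" where
  "in_Hs s c \<longleftrightarrow> (\<lambda>k. (1 + (real_of_int k)\<^sup>2) powr s * (cmod (c k))\<^sup>2) summable_on UNIV"

text \<open>e^{-i xi x} d_x Lambda^alpha e^{i xi x} f : multiplier i(k+xi)|k+xi|^alpha.\<close>
definition twisted_op :: "real \<Rightarrow> real \<Rightarrow> (int \<Rightarrow> complex) \<Rightarrow> int \<Rightarrow> complex" where
  "twisted_op \<alpha> \<xi> c k = \<i> * of_real ((of_int k + \<xi>) * \<bar>of_int k + \<xi>\<bar> powr \<alpha>) * c k"

definition dx_Lambda :: "real \<Rightarrow> (int \<Rightarrow> complex) \<Rightarrow> int \<Rightarrow> complex" where
  "dx_Lambda \<alpha> c k = \<i> * of_real (of_int k * \<bar>of_int k\<bar> powr \<alpha>) * c k"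

definition dx :: "(int \<Rightarrow> complex) \<Rightarrow> int \<Rightarrow> complex" where
  "dx c k = \<i> * of_int k * c k"

definition Lambda :: "real \<Rightarrow> (int \<Rightarrow> complex) \<Rightarrow> int \<Rightarrow> complex" where
  "Lambda s c k = (if k = 0 then 0 else of_real (\<bar>of_int k\<bar> powr s) * c k)"

definition proj0 :: "(int \<Rightarrow> complex) \<Rightarrow> int \<Rightarrow> complex" where
  "proj0 c k = (if k = 0 then 0 else c k)"

definition const_fun :: "complex \<Rightarrow> int \<Rightarrow> complex" where
  "const_fun a k = (if k = 0 then a else 0)"

text \<open>Convergence in L^2 (equivalently in l^2 of Fourier coefficients, by Parseval).\<close>
definition L2_tendsto :: "(nat \<Rightarrow> int \<Rightarrow> complex) \<Rightarrow> (int \<Rightarrow> complex) \<Rightarrow> bool" where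
  "L2_tendsto F g \<longleftrightarrow>
     (\<forall>N. (\<lambda>k. (cmod (F N k - g k))\<^sup>2) summable_on UNIV) \<and>
     ((\<lambda>N. infsum (\<lambda>k. (cmod (F N k - g k))\<^sup>2) UNIV) \<longlonglongrightarrow> 0)"

definition term1 :: "real \<Rightarrow> real \<Rightarrow> (int \<Rightarrow> complex) \<Rightarrow> nat \<Rightarrow> int \<Rightarrow> complex" where
  "term1 \<alpha> \<xi> c l k = \<i> * of_real (((\<alpha> + 1) gchoose (2*l - 1)) * \<xi> ^ (2*l - 1))
      * Lambda (\<alpha> - 2 * (real l - 1)) (proj0 c) k"

definition term2 :: "real \<Rightarrow> real \<Rightarrow> (int \<Rightarrow> complex) \<Rightarrow> nat \<Rightarrow> int \<Rightarrow> complex" where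
  "term2 \<alpha> \<xi> c r k = of_real (((\<alpha> + 1) gchoose (2*r)) * \<xi> ^ (2*r))
      * dx (Lambda (\<alpha> - 2 * real r) (proj0 c)) k"

end

theory Submission
  imports Defs
begin

text \<open>For k \<noteq> 0 and |\<xi>| < 1 \<le> |k| the twisted symbol factors as
  (k + \<xi>) |k + \<xi>|^\<alpha> = k |k|^\<alpha> (1 + \<xi>/k)^(\<alpha>+1). Expanding the last factor by the
  generalised binomial series and separating odd from even powers of \<xi>/k gives, coefficient
  by coefficient, the symbols of the two series: the odd powers produce |k|^(\<alpha>-2m), the even
  ones k |k|^(\<alpha>-2(m+1)); at k = 0 only the constant \<xi> |\<xi>|^\<alpha> c 0 survives. Every term of
  either series is dominated by |binom(\<alpha>+1, n)| |\<xi>|^n times |k|^\<alpha> |c k|: the scalar factors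
  are summable for |\<xi>| < 1 and the weighted coefficients are square summable for c \<in> H^(\<alpha>+1),
  so the tails of the partial sums tend to zero in L^2.\<close>

lemma summable_norm_gchoose_power:
  fixes a z :: "'a :: {real_normed_field, banach}"
  assumes "norm z < 1"
  shows "summable (\<lambda>n. norm ((a gchoose n) * z ^ n))"
  by (rule abs_summable_in_conv_radius) (use assms in \<open>simp add: conv_radius_gchoose\<close>)

lemma summable_norm_strict_mono_reindex:
  fixes f :: "nat \<Rightarrow> 'a :: real_normed_vector"
  assumes "summable (\<lambda>n. norm (f n))" and "strict_mono g"
  shows "summable (\<lambda>m. norm (f (g m)))"
proof -
  define F where "F n = (if n \<in> range g then norm (f n) else 0)" for n
  have "summable F"
    by (rule summable_comparison_test[OF _ assms(1)]) (simp add: F_def)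
  then have "summable (\<lambda>m. F (g m))"
    using summable_mono_reindex[OF assms(2), of F] by (simp add: F_def)
  then show ?thesis by (simp add: F_def)
qed

lemma suminf_split_odd_even:
  fixes f :: "nat \<Rightarrow> real"
  assumes "summable (\<lambda>n. norm (f n))"
  shows "suminf f = f 0 + (\<Sum>m. f (2*m+1)) + (\<Sum>m. f (2*m+2))"
proof -
  have summable_sub: "summable (\<lambda>m. f (g m))" if "strict_mono g" for g
    by (rule summable_norm_cancel, rule summable_norm_strict_mono_reindex[OF assms that])
  have even: "summable (\<lambda>m. f (2*m))" and odd: "summable (\<lambda>m. f (2*m+1))"
    by (auto intro!: summable_sub simp: strict_mono_def)
  have "(\<lambda>n. if even n then f (2 * (n div 2)) else f (2 * ((n - 1) div 2) + 1))
          sums ((\<Sum>m. f (2*m+1)) + (\<Sum>m. f (2*m)))"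
    by (rule sums_if) (use even odd in \<open>simp_all add: summable_sums\<close>)
  moreover have "(\<lambda>n. if even n then f (2 * (n div 2)) else f (2 * ((n - 1) div 2) + 1)) = f"
    by (rule ext) (auto elim: oddE)
  ultimately have "suminf f = (\<Sum>m. f (2*m+1)) + (\<Sum>m. f (2*m))"
    by (simp add: sums_iff)
  also have "(\<Sum>m. f (2*m)) = f 0 + (\<Sum>m. f (2*m+2))"
    using suminf_split_head[OF even] by simp
  finally show ?thesis by simp
qed

lemma twisted_symbol_binomial_form:
  fixes k \<xi> \<alpha> :: real
  assumes "\<bar>\<xi>\<bar> < \<bar>k\<bar>"
  shows "(k + \<xi>) * \<bar>k + \<xi>\<bar> powr \<alpha> = k * \<bar>k\<bar> powr \<alpha> * (1 + \<xi> / k) powr (\<alpha> + 1)"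
proof -
  define x where "x = \<xi> / k"
  have "k \<noteq> 0" using assms by auto
  have "\<bar>x\<bar> < 1" using assms by (simp add: x_def abs_divide divide_less_eq)
  then have x: "1 + x > 0" by linarith
  have "k + \<xi> = k * (1 + x)" using \<open>k \<noteq> 0\<close> by (simp add: x_def field_simps)
  then have "(k + \<xi>) * \<bar>k + \<xi>\<bar> powr \<alpha> = k * \<bar>k\<bar> powr \<alpha> * ((1 + x) powr \<alpha> * (1 + x))"
    using x by (simp add: abs_mult powr_mult)
  also have "(1 + x) powr \<alpha> * (1 + x) = (1 + x) powr (\<alpha> + 1)"
    using x by (simp add: powr_add)
  finally show ?thesis by (simp add: x_def)
qed

lemma abs_powr_diff_even:
  fixes k \<alpha> :: real
  assumes "k \<noteq> 0"
  shows "\<bar>k\<bar> powr (\<alpha> - 2 * real m) = \<bar>k\<bar> powr \<alpha> / k ^ (2*m)"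
proof -
  have "\<bar>k\<bar> powr (\<alpha> - 2 * real m) = \<bar>k\<bar> powr \<alpha> / \<bar>k\<bar> powr real (2*m)"
    by (simp add: powr_diff)
  also have "\<bar>k\<bar> powr real (2*m) = \<bar>k\<bar> ^ (2*m)"
    by (rule powr_realpow) (use assms in simp)
  also have "\<dots> = k ^ (2*m)"
    by (simp add: power_even_abs)
  finally show ?thesis .
qed

lemma odd_power_symbol:
  fixes k \<xi> \<alpha> :: real
  assumes "k \<noteq> 0"
  shows "k * \<bar>k\<bar> powr \<alpha> * (\<xi> / k) ^ (2*m+1) = \<xi> ^ (2*m+1) * \<bar>k\<bar> powr (\<alpha> - 2 * real m)"
  unfolding abs_powr_diff_even[OF assms] using assms by (simp add: power_divide field_simps)

lemma even_power_symbol: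
  fixes k \<xi> \<alpha> :: real
  assumes "k \<noteq> 0"
  shows "k * \<bar>k\<bar> powr \<alpha> * (\<xi> / k) ^ (2*m+2)
       = \<xi> ^ (2*m+2) * (k * \<bar>k\<bar> powr (\<alpha> - 2 * real (Suc m)))"
  unfolding abs_powr_diff_even[OF assms] using assms by (simp add: power_divide field_simps)

lemma twisted_op_binomial_form:
  assumes "\<bar>\<xi>\<bar> < \<bar>real_of_int k\<bar>"
  shows "twisted_op \<alpha> \<xi> c k = dx_Lambda \<alpha> c k * of_real ((1 + \<xi> / of_int k) powr (\<alpha> + 1))"
  unfolding twisted_op_def dx_Lambda_def twisted_symbol_binomial_form[OF assms]
  by (simp add: algebra_simps)

lemma dx_Lambda_mult_of_real:
  "dx_Lambda \<alpha> c k * of_real x = \<i> * of_real (of_int k * \<bar>of_int k\<bar> powr \<alpha> * x) * c k"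
  by (simp add: dx_Lambda_def)

lemma term1_Suc_eq:
  assumes "k \<noteq> 0"
  shows "term1 \<alpha> \<xi> c (Suc m) k
       = dx_Lambda \<alpha> c k * of_real (((\<alpha> + 1) gchoose (2*m+1)) * (\<xi> / of_int k) ^ (2*m+1))"
proof -
  have symbol: "of_int k * \<bar>of_int k\<bar> powr \<alpha> * (((\<alpha> + 1) gchoose (2*m+1)) * (\<xi> / of_int k) ^ (2*m+1))
      = ((\<alpha> + 1) gchoose (2*m+1)) * \<xi> ^ (2*m+1) * \<bar>of_int k\<bar> powr (\<alpha> - 2 * real m)"
    using assms by (simp only: mult.left_commute[of _ "(\<alpha> + 1) gchoose _"] mult.assoc
        flip: odd_power_symbol)
  show ?thesis
    unfolding dx_Lambda_mult_of_real symbol using assms by (simp add: term1_def Lambda_def proj0_def)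
qed

lemma term2_Suc_eq:
  assumes "k \<noteq> 0"
  shows "term2 \<alpha> \<xi> c (Suc m) k
       = dx_Lambda \<alpha> c k * of_real (((\<alpha> + 1) gchoose (2*m+2)) * (\<xi> / of_int k) ^ (2*m+2))"
proof -
  have symbol: "of_int k * \<bar>of_int k\<bar> powr \<alpha> * (((\<alpha> + 1) gchoose (2*m+2)) * (\<xi> / of_int k) ^ (2*m+2))
      = ((\<alpha> + 1) gchoose (2*m+2)) * \<xi> ^ (2*m+2) * (of_int k * \<bar>of_int k\<bar> powr (\<alpha> - 2 * real (Suc m)))"
    using assms by (simp only: mult.left_commute[of _ "(\<alpha> + 1) gchoose _"] mult.assoc
        flip: even_power_symbol)
  show ?thesis
    unfolding dx_Lambda_mult_of_real symbol using assms by (simp add: term2_def dx_def Lambda_def proj0_def)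
qed

lemma twisted_op_expansion:
  assumes "\<bar>\<xi>\<bar> < 1"
  shows "twisted_op \<alpha> \<xi> c k = dx_Lambda \<alpha> c k
           + const_fun (\<i> * of_real (\<xi> * \<bar>\<xi>\<bar> powr \<alpha>) * c 0) k
           + (\<Sum>m. term1 \<alpha> \<xi> c (Suc m) k) + (\<Sum>m. term2 \<alpha> \<xi> c (Suc m) k)"
proof (cases "k = 0")
  case True
  then show ?thesis
    by (simp add: twisted_op_def dx_Lambda_def const_fun_def term1_def term2_def dx_def Lambda_def)
next
  case False
  define f where "f n = ((\<alpha> + 1) gchoose n) * (\<xi> / of_int k) ^ n" for n
  have "\<bar>\<xi>\<bar> < \<bar>real_of_int k\<bar>" using assms False by linarith
  then have x: "norm (\<xi> / of_int k) < 1" by (simp add: abs_divide divide_less_eq)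
  have abs_f: "summable (\<lambda>n. norm (f n))"
    unfolding f_def by (rule summable_norm_gchoose_power[OF x])
  have summable_sub: "summable (\<lambda>m. f (g m))" if "strict_mono g" for g
    by (rule summable_norm_cancel, rule summable_norm_strict_mono_reindex[OF abs_f that])
  have pull_out: "(\<Sum>m. dx_Lambda \<alpha> c k * of_real (f (g m))) = dx_Lambda \<alpha> c k * of_real (\<Sum>m. f (g m))"
    if "strict_mono g" for g
    using summable_sub[OF that] by (simp add: suminf_mult suminf_of_real summable_of_real)
  have "twisted_op \<alpha> \<xi> c k = dx_Lambda \<alpha> c k * of_real (suminf f)"
    unfolding twisted_op_binomial_form[OF \<open>\<bar>\<xi>\<bar> < \<bar>real_of_int k\<bar>\<close>] f_def
    using gen_binomial_real[OF x[unfolded real_norm_def]] by (simp add: sums_iff)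
  also have "\<dots> = dx_Lambda \<alpha> c k * of_real (f 0 + (\<Sum>m. f (2*m+1)) + (\<Sum>m. f (2*m+2)))"
    by (simp only: suminf_split_odd_even[OF abs_f])
  also have "\<dots> = dx_Lambda \<alpha> c k + (\<Sum>m. term1 \<alpha> \<xi> c (Suc m) k) + (\<Sum>m. term2 \<alpha> \<xi> c (Suc m) k)"
    using pull_out[of "\<lambda>m. 2*m+1"] pull_out[of "\<lambda>m. 2*m+2"] False
    by (simp add: term1_Suc_eq term2_Suc_eq f_def distrib_left strict_mono_def)
  finally show ?thesis using False by (simp add: const_fun_def)
qed

lemma norm_dx_Lambda_binomial_term_le:
  assumes "k \<noteq> 0" and "n > 0"
  shows "norm (dx_Lambda \<alpha> c k * of_real (b * (\<xi> / of_int k) ^ n))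
       \<le> \<bar>b\<bar> * \<bar>\<xi>\<bar> ^ n * (\<bar>of_int k\<bar> powr \<alpha> * cmod (c k))"
proof -
  have k: "1 \<le> \<bar>real_of_int k\<bar>" using assms(1) by linarith
  have "\<bar>real_of_int k\<bar> ^ 1 \<le> \<bar>real_of_int k\<bar> ^ n"
    using k assms(2) by (intro power_increasing) auto
  then have ratio: "\<bar>real_of_int k\<bar> / \<bar>real_of_int k\<bar> ^ n \<le> 1"
    using k by simp
  have "norm (dx_Lambda \<alpha> c k * of_real (b * (\<xi> / of_int k) ^ n))
      = \<bar>b\<bar> * \<bar>\<xi>\<bar> ^ n * (\<bar>of_int k\<bar> powr \<alpha> * cmod (c k)) * (\<bar>real_of_int k\<bar> / \<bar>real_of_int k\<bar> ^ n)"
    by (simp add: dx_Lambda_def norm_mult norm_divide norm_power abs_mult power_abs power_divide)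
  also have "\<dots> \<le> \<bar>b\<bar> * \<bar>\<xi>\<bar> ^ n * (\<bar>of_int k\<bar> powr \<alpha> * cmod (c k))"
    by (rule mult_right_le_one_le[OF _ _ ratio]) auto
  finally show ?thesis .
qed

lemma norm_term1_Suc_le:
  "norm (term1 \<alpha> \<xi> c (Suc m) k)
     \<le> \<bar>(\<alpha> + 1) gchoose (2*m+1)\<bar> * \<bar>\<xi>\<bar> ^ (2*m+1) * (\<bar>of_int k\<bar> powr \<alpha> * cmod (c k))"
proof (cases "k = 0")
  case False
  then show ?thesis
    unfolding term1_Suc_eq[OF False] by (rule norm_dx_Lambda_binomial_term_le) simp
qed (simp add: term1_def Lambda_def)

lemma norm_term2_Suc_le:
  "norm (term2 \<alpha> \<xi> c (Suc m) k)
     \<le> \<bar>(\<alpha> + 1) gchoose (2*m+2)\<bar> * \<bar>\<xi>\<bar> ^ (2*m+2) * (\<bar>of_int k\<bar> powr \<alpha> * cmod (c k))"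
proof (cases "k = 0")
  case False
  then show ?thesis
    unfolding term2_Suc_eq[OF False] by (rule norm_dx_Lambda_binomial_term_le) simp
qed (simp add: term2_def dx_def Lambda_def)

lemma in_Hs_weighted_square_summable:
  assumes "in_Hs s c" and "0 \<le> \<beta>" and "\<beta> \<le> s"
  shows "(\<lambda>k. (\<bar>of_int k\<bar> powr \<beta> * cmod (c k))\<^sup>2) summable_on UNIV"
proof (rule summable_on_comparison_test[OF assms(1)[unfolded in_Hs_def]])
  fix k :: int
  have "(\<bar>real_of_int k\<bar> powr \<beta>)\<^sup>2 = ((real_of_int k)\<^sup>2) powr \<beta>"
    by (simp add: power2_eq_square powr_mult[symmetric] abs_mult)
  also have "\<dots> \<le> (1 + (real_of_int k)\<^sup>2) powr \<beta>"
    using assms(2) by (intro powr_mono2) auto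
  also have "\<dots> \<le> (1 + (real_of_int k)\<^sup>2) powr s"
    using assms(3) by (intro powr_mono) auto
  finally show "(\<bar>of_int k\<bar> powr \<beta> * cmod (c k))\<^sup>2
      \<le> (1 + (real_of_int k)\<^sup>2) powr s * (cmod (c k))\<^sup>2"
    by (simp add: power_mult_distrib mult_right_mono)
qed simp

lemma norm_partial_sum_minus_suminf_le:
  fixes u :: "nat \<Rightarrow> 'a :: banach"
  assumes "summable E" and bound: "\<And>m. norm (u m) \<le> E m * w"
  shows "norm ((\<Sum>m<N. u m) - (\<Sum>m. u m)) \<le> (suminf E - (\<Sum>m<N. E m)) * w"
proof -
  have sE: "summable (\<lambda>m. E m * w)" using assms(1) by (rule summable_mult2)
  have su: "summable (\<lambda>m. norm (u m))"
    by (rule summable_comparison_test[OF _ sE]) (simp add: bound)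
  have "norm ((\<Sum>m<N. u m) - (\<Sum>m. u m)) = norm (\<Sum>i. u (i + N))"
    using suminf_minus_initial_segment[OF summable_norm_cancel[OF su], of N]
    by (simp add: norm_minus_commute)
  also have "\<dots> \<le> (\<Sum>i. norm (u (i + N)))"
    using su by (intro summable_norm) (simp add: summable_iff_shift[where f="\<lambda>m. norm (u m)"])
  also have "\<dots> \<le> (\<Sum>i. E (i + N) * w)"
    using su sE by (intro suminf_le bound)
      (simp_all add: summable_iff_shift[where f="\<lambda>m. norm (u m)"] summable_iff_shift[where f="\<lambda>m. E m * w"])
  also have "\<dots> = (suminf E - (\<Sum>m<N. E m)) * w"
    using suminf_minus_initial_segment[OF sE, of N]
    by (simp add: suminf_mult2[OF assms(1), symmetric] sum_distrib_right left_diff_distrib)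
  finally show ?thesis .
qed

lemma L2_tendsto_dominated:
  assumes bound: "\<And>N k. cmod (F N k - g k) \<le> t N * W k"
    and "t \<longlonglongrightarrow> 0" and sW: "(\<lambda>k. (W k)\<^sup>2) summable_on UNIV"
  shows "L2_tendsto F g"
proof -
  define C where "C = infsum (\<lambda>k. (W k)\<^sup>2) UNIV"
  have square_bound: "(cmod (F N k - g k))\<^sup>2 \<le> (t N)\<^sup>2 * (W k)\<^sup>2" for N k
    using power_mono[OF bound[of N k], of 2] by (simp add: power_mult_distrib)
  have summable: "(\<lambda>k. (cmod (F N k - g k))\<^sup>2) summable_on UNIV" for N
    by (rule summable_on_comparison_test[OF summable_on_cmult_right[OF sW, of "(t N)\<^sup>2"]])
      (simp_all add: square_bound)
  have upper: "infsum (\<lambda>k. (cmod (F N k - g k))\<^sup>2) UNIV \<le> (t N)\<^sup>2 * C" for N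
  proof -
    have "infsum (\<lambda>k. (cmod (F N k - g k))\<^sup>2) UNIV \<le> infsum (\<lambda>k. (t N)\<^sup>2 * (W k)\<^sup>2) UNIV"
      by (rule infsum_mono[OF summable summable_on_cmult_right[OF sW]]) (rule square_bound)
    also have "\<dots> = (t N)\<^sup>2 * C"
      unfolding C_def by (rule infsum_cmult_right')
    finally show ?thesis .
  qed
  have "(\<lambda>N. (t N)\<^sup>2 * C) \<longlonglongrightarrow> 0"
    using tendsto_mult_right[OF tendsto_power[OF \<open>t \<longlonglongrightarrow> 0\<close>, of 2], of C] by simp
  then have "(\<lambda>N. infsum (\<lambda>k. (cmod (F N k - g k))\<^sup>2) UNIV) \<longlonglongrightarrow> 0"
    by (rule tendsto_sandwich[rotated 2, OF tendsto_const])
      (simp_all add: upper infsum_nonneg)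
  with summable show ?thesis unfolding L2_tendsto_def by blast
qed

lemma L2_tendsto_partial_sums:
  assumes "summable E" and bound: "\<And>m k. norm (u (Suc m) k) \<le> E m * W k"
    and "(\<lambda>k. (W k)\<^sup>2) summable_on UNIV"
  shows "L2_tendsto (\<lambda>N k. \<Sum>l=1..N. u l k) (\<lambda>k. \<Sum>m. u (Suc m) k)"
proof (rule L2_tendsto_dominated)
  show "cmod ((\<Sum>l=1..N. u l k) - (\<Sum>m. u (Suc m) k)) \<le> (suminf E - (\<Sum>m<N. E m)) * W k" for N k
    using norm_partial_sum_minus_suminf_le[OF assms(1) bound]
    by (simp add: sum.atLeast1_atMost_eq)
  show "(\<lambda>N. suminf E - (\<Sum>m<N. E m)) \<longlonglongrightarrow> 0"
    using tendsto_diff[OF tendsto_const[of "suminf E"] summable_LIMSEQ[OF assms(1)]] by simp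
qed fact

theorem lemma3p3:
  fixes \<alpha> :: real and c :: "int \<Rightarrow> complex"
  assumes "\<alpha> > 0" and "in_Hs (\<alpha> + 1) c"
  shows "\<exists>\<delta>>0. \<forall>\<xi>::real. \<bar>\<xi>\<bar> < \<delta> \<longrightarrow>
    (\<exists>g h.
       L2_tendsto (\<lambda>N k. \<Sum>l=1..N. term1 \<alpha> \<xi> c l k) g \<and>
       L2_tendsto (\<lambda>N k. \<Sum>r=1..N. term2 \<alpha> \<xi> c r k) h \<and>
       (\<forall>k. twisted_op \<alpha> \<xi> c k =
              dx_Lambda \<alpha> c k
            + const_fun (\<i> * of_real (\<xi> * \<bar>\<xi>\<bar> powr \<alpha>) * c 0) k
            + g k + h k))"
proof (intro exI[of _ 1] conjI allI impI)
  fix \<xi> :: real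
  assume \<xi>: "\<bar>\<xi>\<bar> < 1"
  define B where "B n = \<bar>(\<alpha> + 1) gchoose n\<bar> * \<bar>\<xi>\<bar> ^ n" for n
  have abs_B: "summable (\<lambda>n. norm (B n))"
    using summable_norm_gchoose_power[of "\<bar>\<xi>\<bar>" "\<alpha> + 1"] \<xi> by (simp add: B_def abs_mult power_abs)
  have subseries: "summable (\<lambda>m. B (g m))" if "strict_mono g" for g
    using summable_norm_strict_mono_reindex[OF abs_B that] by (simp add: B_def)
  have odd: "summable (\<lambda>m. B (2*m+1))" and even: "summable (\<lambda>m. B (2*m+2))"
    by (rule subseries, simp add: strict_mono_def)+
  have W: "(\<lambda>k. (\<bar>of_int k\<bar> powr \<alpha> * cmod (c k))\<^sup>2) summable_on UNIV"
    using assms by (intro in_Hs_weighted_square_summable) auto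
  have "L2_tendsto (\<lambda>N k. \<Sum>l=1..N. term1 \<alpha> \<xi> c l k) (\<lambda>k. \<Sum>m. term1 \<alpha> \<xi> c (Suc m) k)"
    by (rule L2_tendsto_partial_sums[OF odd _ W]) (unfold B_def, rule norm_term1_Suc_le)
  moreover have "L2_tendsto (\<lambda>N k. \<Sum>r=1..N. term2 \<alpha> \<xi> c r k) (\<lambda>k. \<Sum>m. term2 \<alpha> \<xi> c (Suc m) k)"
    by (rule L2_tendsto_partial_sums[OF even _ W]) (unfold B_def, rule norm_term2_Suc_le)
  ultimately show "\<exists>g h. L2_tendsto (\<lambda>N k. \<Sum>l=1..N. term1 \<alpha> \<xi> c l k) g \<and>
       L2_tendsto (\<lambda>N k. \<Sum>r=1..N. term2 \<alpha> \<xi> c r k) h \<and>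
       (\<forall>k. twisted_op \<alpha> \<xi> c k = dx_Lambda \<alpha> c k
            + const_fun (\<i> * of_real (\<xi> * \<bar>\<xi>\<bar> powr \<alpha>) * c 0) k + g k + h k)"
    using twisted_op_expansion[OF \<xi>] by blast
qed simp

end
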